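(* There exist a connected continuous-time interconnection $\Gamma=[\gamma_{ij}]\in\mathbb{R}^{p\times p}$ and a map $Q:\mathbb{R}\to\overline{\mathcal Q}_n$ satisfying $$\liminf_{T\to\infty}\frac1T\,\sigma_{\min}\Big(\int_0^TQ_t\,dt\Big)>0$$ such that the solutions $x_i(\cdot)$ of $\dot x_i=Q_t\sum_{j\ne i}\gamma_{ij}(x_j-x_i)$ do not synchronize (for some initial condition).
   Context: $\sigma_{\min}$ smallest singular value; $\overline{\mathcal Q}_n$ the set of symmetric positive semidefinite $n\times n$ matrices with induced 2-norm at most $1$. Continuous-time interconnection: $\gamma_{ij}\ge0$ ($i\ne j$), $\gamma_{ii}=-\sum_{j\ne i}\gamma_{ij}$; graph edge $(n_i,n_j)$ iff $\gamma_{ij}>0$; connected if some node is reachable by a directed path from every other node. Functions $x_i$ synchronize if there is $\bar x$ with $|x_i(t)-\bar x(t)|\to0$ as $t\to\infty$ for all $i$. *)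

theory Defs
  imports "HOL-Analysis.Analysis"
begin

text \<open>Vectors in R^n are represented as functions nat => real (only indices < n matter),
  n x n matrices as functions nat => nat => real (only indices < n matter).\<close>

definition vnorm :: "nat \<Rightarrow> (nat \<Rightarrow> real) \<Rightarrow> real" where
  "vnorm n v = sqrt (\<Sum>k<n. (v k)^2)"

definition mvmult :: "nat \<Rightarrow> (nat \<Rightarrow> nat \<Rightarrow> real) \<Rightarrow> (nat \<Rightarrow> real) \<Rightarrow> (nat \<Rightarrow> real)" where
  "mvmult n M v = (\<lambda>k. \<Sum>l<n. M k l * v l)"

definition sigma_min :: "nat \<Rightarrow> (nat \<Rightarrow> nat \<Rightarrow> real) \<Rightarrow> real" where
  "sigma_min n M = Inf {vnorm n (mvmult n M v) | v. vnorm n v = 1}"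

definition Qbar :: "nat \<Rightarrow> (nat \<Rightarrow> nat \<Rightarrow> real) set" where
  "Qbar n = {M. (\<forall>k<n. \<forall>l<n. M k l = M l k)
               \<and> (\<forall>v. 0 \<le> (\<Sum>k<n. v k * mvmult n M v k))
               \<and> (\<forall>v. vnorm n (mvmult n M v) \<le> vnorm n v)}"

definition interconnection :: "nat \<Rightarrow> (nat \<Rightarrow> nat \<Rightarrow> real) \<Rightarrow> bool" where
  "interconnection p \<Gamma> \<longleftrightarrow>
     (\<forall>i<p. \<forall>j<p. i \<noteq> j \<longrightarrow> 0 \<le> \<Gamma> i j) \<and>
     (\<forall>i<p. \<Gamma> i i = - (\<Sum>j\<in>{..<p} - {i}. \<Gamma> i j))"

definition edge :: "nat \<Rightarrow> (nat \<Rightarrow> nat \<Rightarrow> real) \<Rightarrow> nat \<Rightarrow> nat \<Rightarrow> bool" where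
  "edge p \<Gamma> i j \<longleftrightarrow> i < p \<and> j < p \<and> 0 < \<Gamma> i j"

definition connected_ic :: "nat \<Rightarrow> (nat \<Rightarrow> nat \<Rightarrow> real) \<Rightarrow> bool" where
  "connected_ic p \<Gamma> \<longleftrightarrow> (\<exists>k<p. \<forall>j<p. j \<noteq> k \<longrightarrow> (edge p \<Gamma>)\<^sup>+\<^sup>+ j k)"

definition int_Q :: "(real \<Rightarrow> nat \<Rightarrow> nat \<Rightarrow> real) \<Rightarrow> real \<Rightarrow> nat \<Rightarrow> nat \<Rightarrow> real" where
  "int_Q Q T = (\<lambda>k l. integral {0..T} (\<lambda>t. Q t k l))"

text \<open>x i k t is component k of agent i at time t. Solution (Caratheodory / integral form) on
  [0, infinity) of  x_i' = Q_t sum_{j ~= i} gamma_ij (x_j - x_i).\<close>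
definition is_solution ::
  "nat \<Rightarrow> nat \<Rightarrow> (nat \<Rightarrow> nat \<Rightarrow> real) \<Rightarrow> (real \<Rightarrow> nat \<Rightarrow> nat \<Rightarrow> real)
     \<Rightarrow> (nat \<Rightarrow> nat \<Rightarrow> real \<Rightarrow> real) \<Rightarrow> bool" where
  "is_solution p n \<Gamma> Q x \<longleftrightarrow>
     (\<forall>i<p. \<forall>k<n. \<forall>t\<ge>0.
        ((\<lambda>s. \<Sum>l<n. Q s k l * (\<Sum>j\<in>{..<p} - {i}. \<Gamma> i j * (x j l s - x i l s)))
           has_integral (x i k t - x i k 0)) {0..t})"

definition synchronize :: "nat \<Rightarrow> nat \<Rightarrow> (nat \<Rightarrow> nat \<Rightarrow> real \<Rightarrow> real) \<Rightarrow> bool" where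
  "synchronize p n x \<longleftrightarrow>
     (\<exists>xbar :: real \<Rightarrow> nat \<Rightarrow> real.
        \<forall>i<p. ((\<lambda>t. vnorm n (\<lambda>k. x i k t - xbar t k)) \<longlongrightarrow> 0) at_top)"

end

theory Submission
  imports Defs
begin

text \<open>
  Two agents suffice: agent 1 has no neighbours and rests at the origin, and agent 0 follows it,
  so that x_0' = - Q_t x_0. In the frame u = (cos \<phi>, sin \<phi>), w = (- sin \<phi>, cos \<phi>) turning
  with angle \<phi> = ln (1 + t) / 4 and speed b = \<phi>' = 1 / (4 (1 + t)), let Q_t have the matrix
  [[4 b^2, -b], [-b, 1/2]]. Then - Q (r u) = - 4 b^2 r u + b r w = (r u)' as soon as
  r' = - 4 b^2 r, so x_0 = r u with r = exp (- t / (4 (1 + t))) \<ge> exp (-1/4) spirals around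
  agent 1 without ever reaching it.

  Yet v^T Q_t v \<ge> (w \<bullet> v)^2 / 4, and (w \<bullet> v)^2 = (1 - cos (2 (\<phi> - \<theta>))) / 2 for the unit
  vector v at angle \<theta>. Although \<phi> grows only logarithmically, the integral of the cosine term
  over [0, T] stays below (2 / sqrt 5) (1 + T) < (9/10) (1 + T) in absolute value, so every
  quadratic form of the integral of Q over [0, T] grows like T / 80.
\<close>

section \<open>Norms, smallest singular values and synchronization\<close>

lemma vnorm_eq_L2_set: "vnorm n v = L2_set v {..<n}"
  by (simp add: vnorm_def L2_set_def)

lemma vnorm_diff_triangle:
  "vnorm n (\<lambda>k. a k - b k) \<le> vnorm n (\<lambda>k. a k - c k) + vnorm n (\<lambda>k. b k - c k)"
proof -
  have "vnorm n (\<lambda>k. a k - b k) = L2_set (\<lambda>k. (a k - c k) + (c k - b k)) {..<n}"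
    by (simp add: vnorm_eq_L2_set)
  also have "\<dots> \<le> L2_set (\<lambda>k. a k - c k) {..<n} + L2_set (\<lambda>k. c k - b k) {..<n}"
    by (rule L2_set_triangle_ineq)
  also have "L2_set (\<lambda>k. c k - b k) {..<n} = L2_set (\<lambda>k. b k - c k) {..<n}"
    unfolding L2_set_def by (simp add: power2_commute)
  finally show ?thesis by (simp add: vnorm_eq_L2_set)
qed

lemma not_synchronize_if_separated:
  assumes "i < p" "j < p" "0 < c"
    and "eventually (\<lambda>t. c \<le> vnorm n (\<lambda>k. x i k t - x j k t)) at_top"
  shows "\<not> synchronize p n x"
proof
  assume "synchronize p n x"
  then obtain xbar where lim: "\<And>i. i < p \<Longrightarrow> ((\<lambda>t. vnorm n (\<lambda>k. x i k t - xbar t k)) \<longlongrightarrow> 0) at_top"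
    unfolding synchronize_def by blast
  have "((\<lambda>t. vnorm n (\<lambda>k. x i k t - xbar t k) + vnorm n (\<lambda>k. x j k t - xbar t k)) \<longlongrightarrow> 0 + 0) at_top"
    using assms(1,2) by (intro tendsto_add lim)
  then have "eventually (\<lambda>t. vnorm n (\<lambda>k. x i k t - xbar t k) + vnorm n (\<lambda>k. x j k t - xbar t k) < c) at_top"
    using assms(3) by (intro order_tendstoD(2)) auto
  with assms(4) have "eventually (\<lambda>t::real. False) at_top"
  proof eventually_elim
    case (elim t)
    then show False
      using vnorm_diff_triangle[of n "\<lambda>k. x i k t" "\<lambda>k. x j k t" "xbar t"] by linarith
  qed
  then show False by simp
qed

lemma quadratic_form_le_vnorm_mvmult:
  assumes "vnorm n v = 1"
  shows "(\<Sum>k<n. v k * mvmult n M v k) \<le> vnorm n (mvmult n M v)"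
proof -
  have "(\<Sum>k<n. v k * mvmult n M v k) \<le> (\<Sum>k<n. \<bar>v k\<bar> * \<bar>mvmult n M v k\<bar>)"
    by (intro sum_mono) (simp add: abs_mult[symmetric])
  also have "\<dots> \<le> vnorm n v * vnorm n (mvmult n M v)"
    unfolding vnorm_eq_L2_set by (rule L2_set_mult_ineq)
  finally show ?thesis using assms by simp
qed

lemma sigma_min_ge_if_quadratic_form_ge:
  assumes "0 < n" and "\<And>v. vnorm n v = 1 \<Longrightarrow> c \<le> (\<Sum>k<n. v k * mvmult n M v k)"
  shows "c \<le> sigma_min n M"
  unfolding sigma_min_def
proof (rule cInf_greatest)
  have "(\<Sum>k<n. (if k = 0 then 1 else 0 :: real)\<^sup>2) = (\<Sum>k<n. if k = 0 then 1 else 0)"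
    by (rule sum.cong) simp_all
  then have "vnorm n (\<lambda>k. if k = 0 then 1 else 0) = 1"
    using assms(1) by (simp add: vnorm_def)
  then show "{vnorm n (mvmult n M v) |v. vnorm n v = 1} \<noteq> {}" by blast
next
  fix y assume "y \<in> {vnorm n (mvmult n M v) |v. vnorm n v = 1}"
  then show "c \<le> y"
    using assms(2) quadratic_form_le_vnorm_mvmult by (fastforce intro: order_trans)
qed

lemma has_integral_quadratic_form_int_Q:
  assumes "\<And>k l. k < n \<Longrightarrow> l < n \<Longrightarrow> (\<lambda>t. Q t k l) integrable_on {0..T}"
  shows "((\<lambda>t. \<Sum>k<n. v k * mvmult n (Q t) v k) has_integral
           (\<Sum>k<n. v k * mvmult n (int_Q Q T) v k)) {0..T}"
proof -
  have entry: "((\<lambda>t. v k * (Q t k l * v l)) has_integral v k * (int_Q Q T k l * v l)) {0..T}"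
    if "k < n" "l < n" for k l
  proof -
    have "((\<lambda>t. Q t k l) has_integral int_Q Q T k l) {0..T}"
      unfolding int_Q_def using assms[OF that] by (rule integrable_integral)
    then show ?thesis by (intro has_integral_mult_right has_integral_mult_left)
  qed
  show ?thesis
    unfolding mvmult_def sum_distrib_left by (intro has_integral_sum finite_lessThan entry) simp_all
qed

section \<open>Symmetric 2 x 2 matrices in a rotating frame\<close>

lemma sum_lessThan_2: "(\<Sum>k<2. f k) = f 0 + f (1::nat)"
  by (simp add: numeral_2_eq_2)

definition frame_u :: "real \<Rightarrow> nat \<Rightarrow> real" where
  "frame_u \<phi> k = (if k = 0 then cos \<phi> else sin \<phi>)"

definition frame_w :: "real \<Rightarrow> nat \<Rightarrow> real" where
  "frame_w \<phi> k = (if k = 0 then - sin \<phi> else cos \<phi>)"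

definition inner2 :: "(nat \<Rightarrow> real) \<Rightarrow> (nat \<Rightarrow> real) \<Rightarrow> real" where
  "inner2 a b = a 0 * b 0 + a 1 * b 1"

lemma frame_u_simps [simp]: "frame_u \<phi> 0 = cos \<phi>" "frame_u \<phi> (Suc 0) = sin \<phi>"
  by (simp_all add: frame_u_def)

lemma frame_w_simps [simp]: "frame_w \<phi> 0 = - sin \<phi>" "frame_w \<phi> (Suc 0) = cos \<phi>"
  by (simp_all add: frame_w_def)

(* R [[A, B], [B, C]] R^T, where the rotation R has the columns frame_u \<phi> and frame_w \<phi>. *)
definition frame_matrix :: "real \<Rightarrow> real \<Rightarrow> real \<Rightarrow> real \<Rightarrow> nat \<Rightarrow> nat \<Rightarrow> real" where
  "frame_matrix \<phi> A B C k l =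
     A * frame_u \<phi> k * frame_u \<phi> l + B * (frame_u \<phi> k * frame_w \<phi> l + frame_w \<phi> k * frame_u \<phi> l)
     + C * frame_w \<phi> k * frame_w \<phi> l"

lemma vnorm_frame_combination:
  "vnorm 2 (\<lambda>k. a * frame_u \<phi> k + b * frame_w \<phi> k) = sqrt (a\<^sup>2 + b\<^sup>2)"
proof -
  have "(a * frame_u \<phi> 0 + b * frame_w \<phi> 0)\<^sup>2 + (a * frame_u \<phi> 1 + b * frame_w \<phi> 1)\<^sup>2 = a\<^sup>2 + b\<^sup>2"
    unfolding One_nat_def frame_u_simps frame_w_simps using sin_cos_squared_add[of \<phi>] by algebra
  then show ?thesis by (simp only: vnorm_def sum_lessThan_2)
qed

lemma vnorm_scaled_frame_u: "vnorm 2 (\<lambda>k. a * frame_u \<phi> k) = \<bar>a\<bar>"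
  using vnorm_frame_combination[of a \<phi> 0] by simp

lemma vnorm_frame_coords:
  "vnorm 2 v = sqrt ((inner2 (frame_u \<phi>) v)\<^sup>2 + (inner2 (frame_w \<phi>) v)\<^sup>2)"
proof -
  have "(inner2 (frame_u \<phi>) v)\<^sup>2 + (inner2 (frame_w \<phi>) v)\<^sup>2 = (v 0)\<^sup>2 + (v 1)\<^sup>2"
    unfolding inner2_def One_nat_def frame_u_simps frame_w_simps using sin_cos_squared_add[of \<phi>] by algebra
  then show ?thesis by (simp only: vnorm_def sum_lessThan_2)
qed

lemma mvmult_frame_matrix:
  "mvmult 2 (frame_matrix \<phi> A B C) v =
     (\<lambda>k. (A * inner2 (frame_u \<phi>) v + B * inner2 (frame_w \<phi>) v) * frame_u \<phi> k
        + (B * inner2 (frame_u \<phi>) v + C * inner2 (frame_w \<phi>) v) * frame_w \<phi> k)"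
  by (simp add: fun_eq_iff mvmult_def sum_lessThan_2 frame_matrix_def inner2_def algebra_simps)

lemma quadratic_form_frame_matrix:
  "(\<Sum>k<2. v k * mvmult 2 (frame_matrix \<phi> A B C) v k) =
     A * (inner2 (frame_u \<phi>) v)\<^sup>2 + 2 * B * inner2 (frame_u \<phi>) v * inner2 (frame_w \<phi>) v
     + C * (inner2 (frame_w \<phi>) v)\<^sup>2"
  by (simp add: mvmult_frame_matrix sum_lessThan_2 inner2_def algebra_simps power2_eq_square)

lemma quadratic_form_2_nonneg:
  fixes A B C \<alpha> \<beta> :: real
  assumes "0 \<le> A" "0 \<le> C" "B\<^sup>2 \<le> A * C"
  shows "0 \<le> A * \<alpha>\<^sup>2 + 2 * B * \<alpha> * \<beta> + C * \<beta>\<^sup>2"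
proof (cases "A = 0")
  case True
  then have "B = 0" using assms(3) by simp
  then show ?thesis using True assms(2) by simp
next
  case False
  have "A * (A * \<alpha>\<^sup>2 + 2 * B * \<alpha> * \<beta> + C * \<beta>\<^sup>2) = (A * \<alpha> + B * \<beta>)\<^sup>2 + (A * C - B\<^sup>2) * \<beta>\<^sup>2"
    by (simp add: algebra_simps power2_eq_square)
  also have "\<dots> \<ge> 0" using assms(3) by simp
  finally show ?thesis using False assms(1) by (simp add: zero_le_mult_iff)
qed

lemma frame_matrix_in_Qbar:
  assumes "0 \<le> A" "0 \<le> C" "B\<^sup>2 \<le> A * C" "A + C \<le> 1"
  shows "frame_matrix \<phi> A B C \<in> Qbar 2"
  unfolding Qbar_def
proof (intro CollectI conjI allI impI)
  fix k l :: nat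
  show "frame_matrix \<phi> A B C k l = frame_matrix \<phi> A B C l k"
    by (simp add: frame_matrix_def algebra_simps)
next
  fix v
  show "0 \<le> (\<Sum>k<2. v k * mvmult 2 (frame_matrix \<phi> A B C) v k)"
    unfolding quadratic_form_frame_matrix using assms(1-3) by (rule quadratic_form_2_nonneg)
next
  fix v
  define \<alpha> where "\<alpha> = inner2 (frame_u \<phi>) v"
  define \<beta> where "\<beta> = inner2 (frame_w \<phi>) v"
  define q where "q = A * \<alpha>\<^sup>2 + 2 * B * \<alpha> * \<beta> + C * \<beta>\<^sup>2"
  have q_nonneg: "0 \<le> q"
    unfolding q_def using assms(1-3) by (rule quadratic_form_2_nonneg)
  \<comment> \<open>I - M is positive semidefinite as well\<close>
  have "(1 - A) * (1 - C) = 1 - (A + C) + A * C" by (simp add: algebra_simps)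
  then have "(- B)\<^sup>2 \<le> (1 - A) * (1 - C)" using assms(3,4) by simp
  then have "0 \<le> (1 - A) * \<alpha>\<^sup>2 + 2 * (- B) * \<alpha> * \<beta> + (1 - C) * \<beta>\<^sup>2"
    using assms(1,2,4) by (intro quadratic_form_2_nonneg) simp_all
  then have q_le: "q \<le> \<alpha>\<^sup>2 + \<beta>\<^sup>2" by (simp add: q_def algebra_simps)
  \<comment> \<open>Cayley--Hamilton: M^2 = (tr M) M - (det M) I\<close>
  have "(A * \<alpha> + B * \<beta>)\<^sup>2 + (B * \<alpha> + C * \<beta>)\<^sup>2 = (A + C) * q - (A * C - B\<^sup>2) * (\<alpha>\<^sup>2 + \<beta>\<^sup>2)"
    by (simp add: q_def algebra_simps power2_eq_square)
  also have "\<dots> \<le> (A + C) * q" using assms(3) by simp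
  also have "\<dots> \<le> q" using mult_right_mono[OF assms(4) q_nonneg] by simp
  finally have "(A * \<alpha> + B * \<beta>)\<^sup>2 + (B * \<alpha> + C * \<beta>)\<^sup>2 \<le> \<alpha>\<^sup>2 + \<beta>\<^sup>2" using q_le by linarith
  then have "sqrt ((A * \<alpha> + B * \<beta>)\<^sup>2 + (B * \<alpha> + C * \<beta>)\<^sup>2) \<le> sqrt (\<alpha>\<^sup>2 + \<beta>\<^sup>2)"
    by (rule real_sqrt_le_mono)
  then show "vnorm 2 (mvmult 2 (frame_matrix \<phi> A B C) v) \<le> vnorm 2 v"
    unfolding mvmult_frame_matrix vnorm_frame_combination vnorm_frame_coords[of v \<phi>]
      \<alpha>_def[symmetric] \<beta>_def[symmetric] .
qed

lemma continuous_on_frame_matrix: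
  fixes S :: "'a::t2_space set"
  assumes "continuous_on S \<phi>" "continuous_on S A" "continuous_on S B" "continuous_on S C"
  shows "continuous_on S (\<lambda>t. frame_matrix (\<phi> t) (A t) (B t) (C t) k l)"
proof -
  have u: "continuous_on S (\<lambda>t. frame_u (\<phi> t) k)" for k
    using continuous_on_cos[OF assms(1)] continuous_on_sin[OF assms(1)]
    by (cases "k = 0") (simp_all add: frame_u_def)
  have w: "continuous_on S (\<lambda>t. frame_w (\<phi> t) k)" for k
    using continuous_on_minus[OF continuous_on_sin[OF assms(1)]] continuous_on_cos[OF assms(1)]
    by (cases "k = 0") (simp_all add: frame_w_def)
  show ?thesis
    unfolding frame_matrix_def by (intro continuous_intros u w assms)
qed

lemma frame_u_has_derivative:
  assumes "(f has_real_derivative f') (at t)"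
  shows "((\<lambda>t. frame_u (f t) k) has_real_derivative f' * frame_w (f t) k) (at t)"
  using DERIV_fun_cos[OF assms] DERIV_fun_sin[OF assms]
  by (simp add: frame_u_def frame_w_def mult.commute)

section \<open>A spiralling trajectory that does not synchronize\<close>

definition spiral_rate :: "real \<Rightarrow> real" where
  "spiral_rate t = 1 / (4 * (1 + t))"

definition spiral_angle :: "real \<Rightarrow> real" where
  "spiral_angle t = ln (1 + t) / 4"

definition spiral_radius :: "real \<Rightarrow> real" where
  "spiral_radius t = exp (- t / (4 * (1 + t)))"

lemma spiral_angle_has_derivative:
  "-1 < t \<Longrightarrow> (spiral_angle has_real_derivative spiral_rate t) (at t)"
  unfolding spiral_angle_def spiral_rate_def
  by (auto intro!: derivative_eq_intros simp: field_simps)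

lemma spiral_radius_has_derivative:
  "-1 < t \<Longrightarrow> (spiral_radius has_real_derivative - 4 * (spiral_rate t)\<^sup>2 * spiral_radius t) (at t)"
  unfolding spiral_radius_def spiral_rate_def
  by (auto intro!: derivative_eq_intros simp: field_simps power2_eq_square)

lemma spiral_rate_bounds: "0 \<le> t \<Longrightarrow> 0 \<le> spiral_rate t \<and> spiral_rate t \<le> 1/4"
  by (simp add: spiral_rate_def field_simps)

lemma spiral_radius_ge: "0 \<le> t \<Longrightarrow> exp (-1/4) \<le> spiral_radius t"
  by (simp add: spiral_radius_def field_simps)

(* Only t \<ge> 0 matters; freezing Q for t < 0 avoids the junk values of ln (1 + t). *)
definition spiral_Q :: "real \<Rightarrow> nat \<Rightarrow> nat \<Rightarrow> real" where
  "spiral_Q t = frame_matrix (spiral_angle (max t 0))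
     (4 * (spiral_rate (max t 0))\<^sup>2) (- spiral_rate (max t 0)) (1/2)"

definition spiral_x :: "nat \<Rightarrow> nat \<Rightarrow> real \<Rightarrow> real" where
  "spiral_x i k t = (if i = 0 then spiral_radius t * frame_u (spiral_angle t) k else 0)"

definition leader_follower :: "nat \<Rightarrow> nat \<Rightarrow> real" where
  "leader_follower i j = (if i = 0 \<and> j = 1 then 1 else if i = 0 \<and> j = 0 then -1 else 0)"

lemma interconnection_leader_follower: "interconnection 2 leader_follower"
proof -
  have "{..<2::nat} - {0} = {1}" "{..<2::nat} - {1} = {0}" by auto
  then show ?thesis
    unfolding interconnection_def by (auto simp: leader_follower_def less_2_cases_iff)
qed

lemma connected_leader_follower: "connected_ic 2 leader_follower"
proof -
  have "edge 2 leader_follower 0 1" by (simp add: edge_def leader_follower_def)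
  then show ?thesis
    unfolding connected_ic_def by (auto simp: less_2_cases_iff)
qed

lemma spiral_Q_in_Qbar: "spiral_Q t \<in> Qbar 2"
proof -
  define b where "b = spiral_rate (max t 0)"
  have "0 \<le> b" "b \<le> 1/4" using spiral_rate_bounds[of "max t 0"] by (auto simp: b_def)
  then have "b\<^sup>2 \<le> (1/4)\<^sup>2" by (intro power_mono)
  then have "4 * b\<^sup>2 + 1/2 \<le> 1" by (simp add: power_divide)
  then show ?thesis
    unfolding spiral_Q_def b_def[symmetric] by (intro frame_matrix_in_Qbar) simp_all
qed

lemma integrable_spiral_Q: "(\<lambda>t. spiral_Q t k l) integrable_on {0..T}"
proof (rule integrable_continuous_real)
  have "continuous_on {0..T} spiral_angle"
    by (intro continuous_at_imp_continuous_on ballI DERIV_isCont[OF spiral_angle_has_derivative]) auto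
  moreover have "continuous_on {0..T} spiral_rate"
    unfolding spiral_rate_def by (intro continuous_intros) auto
  ultimately have "continuous_on {0..T} (\<lambda>t. frame_matrix (spiral_angle t)
      (4 * (spiral_rate t)\<^sup>2) (- spiral_rate t) (1/2) k l)"
    by (intro continuous_on_frame_matrix continuous_intros)
  then show "continuous_on {0..T} (\<lambda>t. spiral_Q t k l)"
    by (rule continuous_on_eq) (simp add: spiral_Q_def)
qed

lemma mvmult_frame_matrix_frame_u:
  "mvmult 2 (frame_matrix \<phi> A B C) (frame_u \<phi>) k = A * frame_u \<phi> k + B * frame_w \<phi> k"
proof -
  have "inner2 (frame_u \<phi>) (frame_u \<phi>) = 1" "inner2 (frame_w \<phi>) (frame_u \<phi>) = 0"
    by (simp_all add: inner2_def frame_u_def frame_w_def)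
  then show ?thesis by (simp add: mvmult_frame_matrix)
qed

lemma spiral_x_follower_has_derivative:
  assumes "0 \<le> t"
  shows "((\<lambda>s. spiral_x 0 k s) has_real_derivative
           - spiral_radius t * mvmult 2 (spiral_Q t) (frame_u (spiral_angle t)) k) (at t)"
proof -
  have "-1 < t" using assms by simp
  from DERIV_mult[OF spiral_radius_has_derivative[OF this]
      frame_u_has_derivative[OF spiral_angle_has_derivative[OF this], of k]]
  show ?thesis
    using assms by (simp add: spiral_x_def spiral_Q_def mvmult_frame_matrix_frame_u algebra_simps)
qed

lemma spiral_is_solution: "is_solution 2 2 leader_follower spiral_Q spiral_x"
  unfolding is_solution_def
proof (intro allI impI)
  fix i k :: nat and t :: real
  assume "i < 2" "k < 2" "0 \<le> t"
  show "((\<lambda>s. \<Sum>l<2. spiral_Q s k l *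
             (\<Sum>j\<in>{..<2} - {i}. leader_follower i j * (spiral_x j l s - spiral_x i l s)))
          has_integral (spiral_x i k t - spiral_x i k 0)) {0..t}"
  proof (cases "i = 0")
    case True
    have "{..<2::nat} - {0} = {1}" by auto
    then have integrand: "(\<Sum>l<2. spiral_Q s k l *
          (\<Sum>j\<in>{..<2} - {0}. leader_follower 0 j * (spiral_x j l s - spiral_x 0 l s)))
        = - spiral_radius s * mvmult 2 (spiral_Q s) (frame_u (spiral_angle s)) k" for s
      by (simp add: leader_follower_def spiral_x_def mvmult_def sum_negf sum_distrib_left algebra_simps)
    have "((\<lambda>s. - spiral_radius s * mvmult 2 (spiral_Q s) (frame_u (spiral_angle s)) k)
           has_integral (spiral_x 0 k t - spiral_x 0 k 0)) {0..t}"
    proof (rule fundamental_theorem_of_calculus[OF \<open>0 \<le> t\<close>])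
      fix s assume "s \<in> {0..t}"
      then show "((\<lambda>s. spiral_x 0 k s) has_vector_derivative
          - spiral_radius s * mvmult 2 (spiral_Q s) (frame_u (spiral_angle s)) k) (at s within {0..t})"
        using spiral_x_follower_has_derivative[of s k]
        by (simp add: has_real_derivative_iff_has_vector_derivative[symmetric] has_field_derivative_at_within)
    qed
    then show ?thesis using True by (simp only: integrand)
  next
    case False
    then have "i = 1" using \<open>i < 2\<close> by auto
    moreover have "{..<2::nat} - {1} = {0}" by auto
    ultimately show ?thesis by (simp add: leader_follower_def spiral_x_def)
  qed
qed

lemma spiral_not_synchronize: "\<not> synchronize 2 2 spiral_x"
proof (rule not_synchronize_if_separated)
  show "eventually (\<lambda>t. exp (-1/4) \<le> vnorm 2 (\<lambda>k. spiral_x 0 k t - spiral_x 1 k t)) at_top"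
    using eventually_ge_at_top[of "0::real"]
  proof eventually_elim
    case (elim t)
    have "vnorm 2 (\<lambda>k. spiral_x 0 k t - spiral_x 1 k t)
        = vnorm 2 (\<lambda>k. spiral_radius t * frame_u (spiral_angle t) k)"
      by (simp add: spiral_x_def)
    also have "\<dots> = spiral_radius t"
      by (simp add: vnorm_scaled_frame_u spiral_radius_def)
    finally show ?case using spiral_radius_ge[OF elim] by simp
  qed
qed simp_all

section \<open>Growth of the integrated matrix\<close>

(* cos (2 (\<phi> t - \<theta>)) = Re ((1 + t)^(i/2) e^(-2 i \<theta>)), whence this primitive of amplitude
   (2 / sqrt 5) (1 + t). *)
definition spiral_cos_primitive :: "real \<Rightarrow> real \<Rightarrow> real" where
  "spiral_cos_primitive \<theta> t =
     4/5 * (1 + t) * (cos (2 * (spiral_angle t - \<theta>)) + sin (2 * (spiral_angle t - \<theta>)) / 2)"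

lemma spiral_cos_primitive_has_derivative:
  assumes "-1 < t"
  shows "(spiral_cos_primitive \<theta> has_real_derivative cos (2 * (spiral_angle t - \<theta>))) (at t)"
proof -
  define g where "g t = 2 * (spiral_angle t - \<theta>)" for t
  have "(g has_real_derivative 2 * spiral_rate t) (at t)"
    unfolding g_def using spiral_angle_has_derivative[OF assms] by (auto intro!: derivative_eq_intros)
  then have deriv: "(spiral_cos_primitive \<theta> has_real_derivative
      4/5 * (cos (g t) + sin (g t) / 2 + (1 + t) * (2 * spiral_rate t) * (cos (g t) / 2 - sin (g t)))) (at t)"
    unfolding spiral_cos_primitive_def g_def[symmetric]
    by (auto intro!: derivative_eq_intros simp: field_simps)
  have rate: "(1 + t) * (2 * spiral_rate t) = 1/2"
    using assms by (simp add: spiral_rate_def)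
  have "4/5 * (cos (g t) + sin (g t) / 2 + (1 + t) * (2 * spiral_rate t) * (cos (g t) / 2 - sin (g t)))
      = cos (g t)"
    unfolding rate by (simp add: field_simps)
  with deriv show ?thesis by (simp only: g_def)
qed

lemma abs_cos_plus_half_sin_le: "\<bar>cos x + sin x / 2\<bar> \<le> (9/8 :: real)"
proof -
  have "(c + s / 2)\<^sup>2 + (s - c / 2)\<^sup>2 = 5/4 * (s\<^sup>2 + c\<^sup>2)" for c s :: real
    by (simp add: power2_eq_square algebra_simps)
  from this[of "cos x" "sin x"]
  have "(cos x + sin x / 2)\<^sup>2 + (sin x - cos x / 2)\<^sup>2 = 5/4" by simp
  then have "(cos x + sin x / 2)\<^sup>2 \<le> 5/4"
    using zero_le_power2[of "sin x - cos x / 2"] by linarith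
  also have "\<dots> \<le> (9/8)\<^sup>2" by (simp add: power2_eq_square)
  finally show ?thesis by (subst power2_le_iff_abs_le[symmetric]) simp_all
qed

lemma abs_spiral_cos_primitive_le:
  assumes "-1 \<le> t"
  shows "\<bar>spiral_cos_primitive \<theta> t\<bar> \<le> 9/10 * (1 + t)"
proof -
  let ?x = "2 * (spiral_angle t - \<theta>)"
  have "\<bar>spiral_cos_primitive \<theta> t\<bar> = 4/5 * (1 + t) * \<bar>cos ?x + sin ?x / 2\<bar>"
    using assms by (simp add: spiral_cos_primitive_def abs_mult)
  also have "\<dots> \<le> 4/5 * (1 + t) * (9/8)"
    using assms abs_cos_plus_half_sin_le by (intro mult_left_mono) auto
  finally show ?thesis by simp
qed

lemma has_integral_cos_spiral_angle:
  assumes "0 \<le> T"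
  shows "((\<lambda>t. cos (2 * (spiral_angle t - \<theta>))) has_integral
           (spiral_cos_primitive \<theta> T - spiral_cos_primitive \<theta> 0)) {0..T}"
proof (rule fundamental_theorem_of_calculus[OF assms])
  fix t assume "t \<in> {0..T}"
  then have "-1 < t" by simp
  then show "(spiral_cos_primitive \<theta> has_vector_derivative cos (2 * (spiral_angle t - \<theta>))) (at t within {0..T})"
    using spiral_cos_primitive_has_derivative
    by (simp add: has_real_derivative_iff_has_vector_derivative[symmetric] has_field_derivative_at_within)
qed

lemma spiral_Q_quadratic_form_ge:
  assumes "0 \<le> t"
  shows "(inner2 (frame_w (spiral_angle t)) v)\<^sup>2 / 4 \<le> (\<Sum>k<2. v k * mvmult 2 (spiral_Q t) v k)"
proof -
  define b where "b = spiral_rate t"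
  define \<alpha> where "\<alpha> = inner2 (frame_u (spiral_angle t)) v"
  define \<beta> where "\<beta> = inner2 (frame_w (spiral_angle t)) v"
  have "\<beta>\<^sup>2 / 4 \<le> (2 * b * \<alpha> - \<beta> / 2)\<^sup>2 + \<beta>\<^sup>2 / 4" by simp
  also have "\<dots> = 4 * b\<^sup>2 * \<alpha>\<^sup>2 + 2 * (- b) * \<alpha> * \<beta> + 1/2 * \<beta>\<^sup>2"
    by (simp add: algebra_simps power2_eq_square)
  also have "\<dots> = (\<Sum>k<2. v k * mvmult 2 (spiral_Q t) v k)"
    using assms by (simp add: spiral_Q_def quadratic_form_frame_matrix b_def \<alpha>_def \<beta>_def)
  finally show ?thesis by (simp only: \<beta>_def)
qed

lemma spiral_int_Q_quadratic_form_ge: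
  assumes "0 \<le> T" and "vnorm 2 v = 1"
  shows "T/80 - 9/40 \<le> (\<Sum>k<2. v k * mvmult 2 (int_Q spiral_Q T) v k)"
proof -
  have "(v 0)\<^sup>2 + (v 1)\<^sup>2 = 1"
    using assms(2) by (simp add: vnorm_def sum_lessThan_2)
  then obtain \<theta> where "v 0 = cos \<theta>" "v 1 = sin \<theta>" by (rule sincos_total_2pi)
  then have "inner2 (frame_w (spiral_angle t)) v = - sin (spiral_angle t - \<theta>)" for t
    by (simp add: inner2_def sin_diff)
  then have integrand:
    "(1 - cos (2 * (spiral_angle t - \<theta>))) / 8 = (inner2 (frame_w (spiral_angle t)) v)\<^sup>2 / 4" for t
    using cos_double_sin[of "spiral_angle t - \<theta>"] by simp
  have pointwise: "(1 - cos (2 * (spiral_angle t - \<theta>))) / 8 \<le> (\<Sum>k<2. v k * mvmult 2 (spiral_Q t) v k)"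
    if "0 \<le> t" for t
    using integrand[of t] spiral_Q_quadratic_form_ge[OF that, of v] by linarith
  define F where "F = spiral_cos_primitive \<theta> T - spiral_cos_primitive \<theta> 0"
  have "((\<lambda>t. 1) has_integral T) {0..T}"
    using has_integral_const_real[of "1::real" 0 T] assms(1) by simp
  then have "((\<lambda>t. (1 - cos (2 * (spiral_angle t - \<theta>))) / 8) has_integral (T - F) / 8) {0..T}"
    unfolding F_def using has_integral_cos_spiral_angle[OF assms(1)]
    by (intro has_integral_divide has_integral_diff)
  moreover have "((\<lambda>t. \<Sum>k<2. v k * mvmult 2 (spiral_Q t) v k) has_integral
      (\<Sum>k<2. v k * mvmult 2 (int_Q spiral_Q T) v k)) {0..T}"
    by (intro has_integral_quadratic_form_int_Q integrable_spiral_Q)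
  ultimately have "(T - F) / 8 \<le> (\<Sum>k<2. v k * mvmult 2 (int_Q spiral_Q T) v k)"
    by (rule has_integral_le) (rule pointwise, simp)
  moreover have "spiral_cos_primitive \<theta> T \<le> 9/10 * (1 + T)"
    using abs_spiral_cos_primitive_le[of T \<theta>] assms(1) by simp
  moreover have "- spiral_cos_primitive \<theta> 0 \<le> 9/10"
    using abs_spiral_cos_primitive_le[of 0 \<theta>] by simp
  ultimately show ?thesis unfolding F_def diff_divide_distrib distrib_left by linarith
qed

lemma spiral_sigma_min_ge:
  assumes "36 \<le> T"
  shows "1/160 \<le> sigma_min 2 (int_Q spiral_Q T) / T"
proof -
  have "T/160 \<le> sigma_min 2 (int_Q spiral_Q T)"
  proof (rule sigma_min_ge_if_quadratic_form_ge)
    fix v :: "nat \<Rightarrow> real" assume "vnorm 2 v = 1"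
    with assms show "T/160 \<le> (\<Sum>k<2. v k * mvmult 2 (int_Q spiral_Q T) v k)"
      using spiral_int_Q_quadratic_form_ge[of T v] by linarith
  qed simp
  then show ?thesis using assms by (simp add: field_simps)
qed

theorem theorem7:
  shows "\<exists>(p::nat) (n::nat) (\<Gamma>::nat \<Rightarrow> nat \<Rightarrow> real) (Q::real \<Rightarrow> nat \<Rightarrow> nat \<Rightarrow> real).
           interconnection p \<Gamma> \<and> connected_ic p \<Gamma> \<and>
           (\<forall>t. Q t \<in> Qbar n) \<and>
           (\<forall>T\<ge>0. \<forall>k<n. \<forall>l<n. (\<lambda>t. Q t k l) integrable_on {0..T}) \<and>
           Liminf at_top (\<lambda>T. ereal (sigma_min n (int_Q Q T) / T)) > 0 \<and>
           (\<exists>x. is_solution p n \<Gamma> Q x \<and> \<not> synchronize p n x)"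
proof (intro exI conjI allI impI)
  show "interconnection 2 leader_follower" by (rule interconnection_leader_follower)
  show "connected_ic 2 leader_follower" by (rule connected_leader_follower)
  show "spiral_Q t \<in> Qbar 2" for t by (rule spiral_Q_in_Qbar)
  show "(\<lambda>t. spiral_Q t k l) integrable_on {0..T}" for k l T by (rule integrable_spiral_Q)
  show "is_solution 2 2 leader_follower spiral_Q spiral_x" by (rule spiral_is_solution)
  show "\<not> synchronize 2 2 spiral_x" by (rule spiral_not_synchronize)
  have "eventually (\<lambda>T. ereal (1/160) \<le> ereal (sigma_min 2 (int_Q spiral_Q T) / T)) at_top"
    using eventually_ge_at_top[of "36::real"] by eventually_elim (simp only: ereal_less_eq(3) spiral_sigma_min_ge)
  then have "ereal (1/160) \<le> Liminf at_top (\<lambda>T. ereal (sigma_min 2 (int_Q spiral_Q T) / T))"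
    by (rule Liminf_bounded)
  then show "0 < Liminf at_top (\<lambda>T. ereal (sigma_min 2 (int_Q spiral_Q T) / T))"
    by (rule less_le_trans[rotated]) simp
qed

end
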